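(* In the calculus $\mathsf{CL}$: (1) the rule Mon$\forall$ (from $b\subseteq a,b\Vdash^\forall A,a\Vdash^\forall A,\Gamma\Rightarrow\Delta$ infer $b\subseteq a,a\Vdash^\forall A,\Gamma\Rightarrow\Delta$) is admissible; (2) the rule L$>$ and the rule L$>^\star$ (from $a\in N(x),x:A>B,\Gamma\Rightarrow\Delta,a\Vdash^\exists A$ and $a\Vdash^\exists A,x\Vdash_aA|B,a\in N(x),x:A>B,\Gamma\Rightarrow\Delta$ infer $a\in N(x),x:A>B,\Gamma\Rightarrow\Delta$) are equivalent, i.e. each is admissible in the calculus containing the other instead.
   Context: Syntax: world labels $x,y,\dots$; neighbourhood labels $a,b,\dots$. Relational atoms $a\in N(x)$, $x\in a$, $a\subseteq b$; labelled formulas: these, $x:A$, $a\Vdash^\exists A$, $a\Vdash^\forall A$, $x\Vdash_aA|B$, for $A,B\in\mathcal{L}::=p\mid\bot\mid A\wedge B\mid A\lor B\mid A\to B\mid A>B$. Sequents $\Gamma\Rightarrow\Delta$: multisets, relational atoms only on the left. Rules of $\mathsf{CL}$ (premisses / conclusion; "fresh" = not occurring in conclusion): initial sequents $x:p,\Gamma\Rightarrow\Delta,x:p$ ($p$ atomic), $x:\bot,\Gamma\Rightarrow\Delta$; G3 rules for $\wedge,\vee,\to$ on $x:A$; L$\forall$: $x:A,x\in a,a\Vdash^\forall A,\Gamma\Rightarrow\Delta$ / $x\in a,a\Vdash^\forall A,\Gamma\Rightarrow\Delta$; R$\forall$ (x fresh): $x\in a,\Gamma\Rightarrow\Delta,x:A$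 / $\Gamma\Rightarrow\Delta,a\Vdash^\forall A$; L$\exists$ (x fresh): $x\in a,x:A,\Gamma\Rightarrow\Delta$ / $a\Vdash^\exists A,\Gamma\Rightarrow\Delta$; R$\exists$: $x\in a,\Gamma\Rightarrow\Delta,x:A,a\Vdash^\exists A$ / $x\in a,\Gamma\Rightarrow\Delta,a\Vdash^\exists A$; R$>$ (a fresh): $a\in N(x),a\Vdash^\exists A,\Gamma\Rightarrow\Delta,x\Vdash_aA|B$ / $\Gamma\Rightarrow\Delta,x:A>B$; L$>$: $a\in N(x),x:A>B,\Gamma\Rightarrow\Delta,a\Vdash^\exists A$ and $x\Vdash_aA|B,a\in N(x),x:A>B,\Gamma\Rightarrow\Delta$ / $a\in N(x),x:A>B,\Gamma\Rightarrow\Delta$; R$|$: $c\in N(x),c\subseteq a,\Gamma\Rightarrow\Delta,x\Vdash_aA|B,c\Vdash^\exists A$ and $c\in N(x),c\subseteq a,\Gamma\Rightarrow\Delta,x\Vdash_aA|B,c\Vdash^\forall A\to B$ / $c\in N(x),c\subseteq a,\Gamma\Rightarrow\Delta,x\Vdash_aA|B$; L$|$ (c fresh): $c\in N(x),c\subseteq a,c\Vdash^\exists A,c\Vdash^\forall A\to B,\Gamma\Rightarrow\Delta$ / $x\Vdash_aA|B,\Gamma\Rightarrow\Delta$; Ref: $a\subseteq a,\Gamma\Rightarrow\Delta$ / $\Gamma\Rightarrow\Delta$; Tr: $c\subseteq a,c\subseteq b,b\subseteq a,\Gamma\Rightarrow\Delta$ / $c\subseteq b,b\subseteq a,\Gamma\Rightarrow\Delta$;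 L$\subseteq$: $x\in a,a\subseteq b,x\in b,\Gamma\Rightarrow\Delta$ / $x\in a,a\subseteq b,\Gamma\Rightarrow\Delta$. *)

theory Defs
  imports Main "HOL-Library.Multiset"
begin

text \<open>Formulas of the language L over atoms of type 'p; Cond A B is A > B.\<close>
datatype 'p fm = At 'p | Bot | Conj "'p fm" "'p fm" | Disj "'p fm" "'p fm"
  | Impl "'p fm" "'p fm" | Cond "'p fm" "'p fm"

text \<open>World labels and neighbourhood labels are both natural numbers; their sort is
determined by the argument position of the constructor.
  RN a x       :  a \<in> N(x)
  RW x a       :  x \<in> a
  RS a b       :  a \<subseteq> b
  Lab x A      :  x : A
  FEx a A      :  a forces-exists A
  FAll a A     :  a forces-forall A
  FCnd x a A B :  x forces_a A|B\<close>
type_synonym wlab = nat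
type_synonym nlab = nat

datatype 'p lf = RN nlab wlab | RW wlab nlab | RS nlab nlab
  | Lab wlab "'p fm" | FEx nlab "'p fm" | FAll nlab "'p fm"
  | FCnd wlab nlab "'p fm" "'p fm"

fun is_rel :: "'p lf \<Rightarrow> bool" where
  "is_rel (RN a x) = True"
| "is_rel (RW x a) = True"
| "is_rel (RS a b) = True"
| "is_rel _ = False"

fun wlabs :: "'p lf \<Rightarrow> wlab set" where
  "wlabs (RN a x) = {x}"
| "wlabs (RW x a) = {x}"
| "wlabs (RS a b) = {}"
| "wlabs (Lab x A) = {x}"
| "wlabs (FEx a A) = {}"
| "wlabs (FAll a A) = {}"
| "wlabs (FCnd x a A B) = {x}"

fun nlabs :: "'p lf \<Rightarrow> nlab set" where
  "nlabs (RN a x) = {a}"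
| "nlabs (RW x a) = {a}"
| "nlabs (RS a b) = {a, b}"
| "nlabs (Lab x A) = {}"
| "nlabs (FEx a A) = {a}"
| "nlabs (FAll a A) = {a}"
| "nlabs (FCnd x a A B) = {a}"

definition wl_seq :: "'p lf multiset \<Rightarrow> 'p lf multiset \<Rightarrow> wlab set" where
  "wl_seq G D = (\<Union>\<phi>\<in>set_mset (G + D). wlabs \<phi>)"

definition nl_seq :: "'p lf multiset \<Rightarrow> 'p lf multiset \<Rightarrow> nlab set" where
  "nl_seq G D = (\<Union>\<phi>\<in>set_mset (G + D). nlabs \<phi>)"

text \<open>Which version of the left rule for > the calculus contains:
  CL uses L>, CLstar is CL with L> replaced by L>*.\<close>
datatype calc = CL | CLstar

text \<open>Relational atoms may only occur on the
left: the initial sequents require D to contain no relational atom, and no rule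
introduces a relational atom on the right.\<close>
inductive deriv :: "calc \<Rightarrow> 'p lf multiset \<Rightarrow> 'p lf multiset \<Rightarrow> bool" for K :: calc where
  init: "\<forall>\<phi>\<in>#D. \<not> is_rel \<phi> \<Longrightarrow>
     deriv K (add_mset (Lab x (At p)) G) (add_mset (Lab x (At p)) D)"
| botL: "\<forall>\<phi>\<in>#D. \<not> is_rel \<phi> \<Longrightarrow> deriv K (add_mset (Lab x Bot) G) D"
| conjL: "deriv K (add_mset (Lab x A) (add_mset (Lab x B) G)) D \<Longrightarrow>
     deriv K (add_mset (Lab x (Conj A B)) G) D"
| conjR: "deriv K G (add_mset (Lab x A) D) \<Longrightarrow> deriv K G (add_mset (Lab x B) D) \<Longrightarrow>
     deriv K G (add_mset (Lab x (Conj A B)) D)"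
| disjL: "deriv K (add_mset (Lab x A) G) D \<Longrightarrow> deriv K (add_mset (Lab x B) G) D \<Longrightarrow>
     deriv K (add_mset (Lab x (Disj A B)) G) D"
| disjR: "deriv K G (add_mset (Lab x A) (add_mset (Lab x B) D)) \<Longrightarrow>
     deriv K G (add_mset (Lab x (Disj A B)) D)"
| implL: "deriv K G (add_mset (Lab x A) D) \<Longrightarrow> deriv K (add_mset (Lab x B) G) D \<Longrightarrow>
     deriv K (add_mset (Lab x (Impl A B)) G) D"
| implR: "deriv K (add_mset (Lab x A) G) (add_mset (Lab x B) D) \<Longrightarrow>
     deriv K G (add_mset (Lab x (Impl A B)) D)"
| allL: "deriv K (add_mset (Lab x A) (add_mset (RW x a) (add_mset (FAll a A) G))) D \<Longrightarrow>
     deriv K (add_mset (RW x a) (add_mset (FAll a A) G)) D"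
| allR: "x \<notin> wl_seq G (add_mset (FAll a A) D) \<Longrightarrow>
     deriv K (add_mset (RW x a) G) (add_mset (Lab x A) D) \<Longrightarrow>
     deriv K G (add_mset (FAll a A) D)"
| exL: "x \<notin> wl_seq (add_mset (FEx a A) G) D \<Longrightarrow>
     deriv K (add_mset (RW x a) (add_mset (Lab x A) G)) D \<Longrightarrow>
     deriv K (add_mset (FEx a A) G) D"
| exR: "deriv K (add_mset (RW x a) G) (add_mset (Lab x A) (add_mset (FEx a A) D)) \<Longrightarrow>
     deriv K (add_mset (RW x a) G) (add_mset (FEx a A) D)"
| condR: "a \<notin> nl_seq G (add_mset (Lab x (Cond A B)) D) \<Longrightarrow>
     deriv K (add_mset (RN a x) (add_mset (FEx a A) G)) (add_mset (FCnd x a A B) D) \<Longrightarrow>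
     deriv K G (add_mset (Lab x (Cond A B)) D)"
| condL: "K = CL \<Longrightarrow>
     deriv K (add_mset (RN a x) (add_mset (Lab x (Cond A B)) G)) (add_mset (FEx a A) D) \<Longrightarrow>
     deriv K (add_mset (FCnd x a A B) (add_mset (RN a x) (add_mset (Lab x (Cond A B)) G))) D \<Longrightarrow>
     deriv K (add_mset (RN a x) (add_mset (Lab x (Cond A B)) G)) D"
| condLstar: "K = CLstar \<Longrightarrow>
     deriv K (add_mset (RN a x) (add_mset (Lab x (Cond A B)) G)) (add_mset (FEx a A) D) \<Longrightarrow>
     deriv K (add_mset (FEx a A) (add_mset (FCnd x a A B)
        (add_mset (RN a x) (add_mset (Lab x (Cond A B)) G)))) D \<Longrightarrow>
     deriv K (add_mset (RN a x) (add_mset (Lab x (Cond A B)) G)) D"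
| cndR: "deriv K (add_mset (RN c x) (add_mset (RS c a) G))
         (add_mset (FCnd x a A B) (add_mset (FEx c A) D)) \<Longrightarrow>
     deriv K (add_mset (RN c x) (add_mset (RS c a) G))
         (add_mset (FCnd x a A B) (add_mset (FAll c (Impl A B)) D)) \<Longrightarrow>
     deriv K (add_mset (RN c x) (add_mset (RS c a) G)) (add_mset (FCnd x a A B) D)"
| cndL: "c \<notin> nl_seq (add_mset (FCnd x a A B) G) D \<Longrightarrow>
     deriv K (add_mset (RN c x) (add_mset (RS c a) (add_mset (FEx c A)
        (add_mset (FAll c (Impl A B)) G)))) D \<Longrightarrow>
     deriv K (add_mset (FCnd x a A B) G) D"
| refl: "deriv K (add_mset (RS a a) G) D \<Longrightarrow> deriv K G D"
| trans: "deriv K (add_mset (RS c a) (add_mset (RS c b) (add_mset (RS b a) G))) D \<Longrightarrow>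
     deriv K (add_mset (RS c b) (add_mset (RS b a) G)) D"
| subL: "deriv K (add_mset (RW x a) (add_mset (RS a b) (add_mset (RW x b) G))) D \<Longrightarrow>
     deriv K (add_mset (RW x a) (add_mset (RS a b) G)) D"

end

theory Submission
  imports Defs
begin

(* Derivability in CL and in CL* coincides with derivability in cderiv, where the eigenlabel of
   a rule may be any label outside a finite set. In cderiv, renaming and weakening are admissible
   by plain rule induction, every rule that does not copy its principal formula is invertible,
   and contraction follows by induction on the weight of the contracted formula.
   Mon\<forall>: an instance x : A of b \<Vdash>\<forall> A used at x \<in> b is also an instance of a \<Vdash>\<forall> A,
   because x \<in> a by L\<subseteq>. L> is admissible in CL* by weakening its right premise with
   a \<Vdash>\<exists> A. L>* is admissible in CL because a \<Vdash>\<exists> A is redundant next to x \<Vdash>_a A|B: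
   L| yields c \<subseteq> a and c \<Vdash>\<exists> A, a witness z \<in> c of A lies in a by L\<subseteq>, and the second
   copy of z : A, obtained by inverting a \<Vdash>\<exists> A at z, is contracted. *)

lemma in_diff_single_neq [simp]: "a \<noteq> b \<Longrightarrow> a \<in># M - {#b#} \<longleftrightarrow> a \<in># M"
  unfolding count_greater_zero_iff[symmetric] by simp

lemma in_diff_single_dup: "F \<in># M - {#F#} \<Longrightarrow> Q \<in># M \<Longrightarrow> Q \<in># M - {#F#}"
  by (metis in_diff_single_neq)

lemma in_diff_single_selfE:
  assumes "F \<in># M - {#F#}"
  obtains M0 where "M = add_mset F (add_mset F M0)"
  using assms by (metis in_diffD insert_DiffM)

lemma multi_member_split2:
  assumes "p \<in># M" and "q \<in># M" and "p \<noteq> q"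
  obtains M0 where "M = add_mset p (add_mset q M0)"
  using assms by (metis insert_DiffM in_diff_single_neq)

lemma contract_mset:
  assumes "\<And>x H. x \<in># M \<Longrightarrow> P (add_mset x (add_mset x H)) \<Longrightarrow> P (add_mset x H)"
    and "P (M + M + H)"
  shows "P (M + H)"
  using assms
proof (induction M arbitrary: H)
  case (add x M)
  have contract: "P (add_mset y H')" if "y \<in># add_mset x M" "P (add_mset y (add_mset y H'))" for y H'
    by (rule add.prems(1)[OF that])
  have "P (add_mset x (add_mset x (M + M + H)))"
    using add.prems(2) by (simp add: ac_simps)
  then have "P (add_mset x (M + M + H))"
    by (rule contract[rotated]) simp
  then have "P (M + M + add_mset x H)"
    by (simp add: ac_simps)
  then have "P (M + add_mset x H)"
    by (rule add.IH[rotated]) (rule contract; simp)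
  then show ?case
    by (simp add: ac_simps)
qed simp

section \<open>The cofinite calculus\<close>

(* The rules that do not copy their principal formula F into the premises. premsL y F lists the
   premises of the left rule for F as pairs (formulas added to the antecedent, formulas added to
   the succedent) once F is removed; y is the eigenlabel of L\<exists> and L| and is ignored by the
   propositional rules. *)
fun decomposableL :: "'p lf \<Rightarrow> bool" where
  "decomposableL (Lab x (Conj A B)) = True"
| "decomposableL (Lab x (Disj A B)) = True"
| "decomposableL (Lab x (Impl A B)) = True"
| "decomposableL (FEx a A) = True"
| "decomposableL (FCnd x a A B) = True"
| "decomposableL _ = False"

fun decomposableR :: "'p lf \<Rightarrow> bool" where
  "decomposableR (Lab x (Conj A B)) = True"
| "decomposableR (Lab x (Disj A B)) = True"
| "decomposableR (Lab x (Impl A B)) = True"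
| "decomposableR (Lab x (Cond A B)) = True"
| "decomposableR (FAll a A) = True"
| "decomposableR _ = False"

fun premsL :: "nat \<Rightarrow> 'p lf \<Rightarrow> ('p lf multiset \<times> 'p lf multiset) set" where
  "premsL y (Lab x (Conj A B)) = {({#Lab x A, Lab x B#}, {#})}"
| "premsL y (Lab x (Disj A B)) = {({#Lab x A#}, {#}), ({#Lab x B#}, {#})}"
| "premsL y (Lab x (Impl A B)) = {({#}, {#Lab x A#}), ({#Lab x B#}, {#})}"
| "premsL y (FEx a A) = {({#RW y a, Lab y A#}, {#})}"
| "premsL y (FCnd x a A B) = {({#RN y x, RS y a, FEx y A, FAll y (Impl A B)#}, {#})}"
| "premsL y _ = {}"

fun premsR :: "nat \<Rightarrow> 'p lf \<Rightarrow> ('p lf multiset \<times> 'p lf multiset) set" where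
  "premsR y (Lab x (Conj A B)) = {({#}, {#Lab x A#}), ({#}, {#Lab x B#})}"
| "premsR y (Lab x (Disj A B)) = {({#}, {#Lab x A, Lab x B#})}"
| "premsR y (Lab x (Impl A B)) = {({#Lab x A#}, {#Lab x B#})}"
| "premsR y (Lab x (Cond A B)) = {({#RN y x, FEx y A#}, {#FCnd x y A B#})}"
| "premsR y (FAll a A) = {({#RW y a#}, {#Lab y A#})}"
| "premsR y _ = {}"

(* deriv with each eigenlabel condition replaced by cofinite quantification, and with the principal
   formulas of the remaining rules located by membership; see deriv_iff_cderiv. *)
inductive cderiv :: "calc \<Rightarrow> 'p lf multiset \<Rightarrow> 'p lf multiset \<Rightarrow> bool" for K :: calc where
  init: "Lab x (At p) \<in># G \<Longrightarrow> Lab x (At p) \<in># D \<Longrightarrow> \<forall>\<phi>\<in>#D. \<not> is_rel \<phi> \<Longrightarrow> cderiv K G D"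
| botL: "Lab x Bot \<in># G \<Longrightarrow> \<forall>\<phi>\<in>#D. \<not> is_rel \<phi> \<Longrightarrow> cderiv K G D"
| decompL: "decomposableL F \<Longrightarrow> finite S \<Longrightarrow>
     (\<And>y GL DL. y \<notin> S \<Longrightarrow> (GL, DL) \<in> premsL y F \<Longrightarrow> cderiv K (GL + G) (DL + D)) \<Longrightarrow>
     cderiv K (add_mset F G) D"
| decompR: "decomposableR F \<Longrightarrow> finite S \<Longrightarrow>
     (\<And>y GL DL. y \<notin> S \<Longrightarrow> (GL, DL) \<in> premsR y F \<Longrightarrow> cderiv K (GL + G) (DL + D)) \<Longrightarrow>
     cderiv K G (add_mset F D)"
| allL: "RW x a \<in># G \<Longrightarrow> FAll a A \<in># G \<Longrightarrow> cderiv K (add_mset (Lab x A) G) D \<Longrightarrow> cderiv K G D"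
| exR: "RW x a \<in># G \<Longrightarrow> FEx a A \<in># D \<Longrightarrow> cderiv K G (add_mset (Lab x A) D) \<Longrightarrow> cderiv K G D"
| condL: "K = CL \<Longrightarrow> RN a x \<in># G \<Longrightarrow> Lab x (Cond A B) \<in># G \<Longrightarrow>
     cderiv K G (add_mset (FEx a A) D) \<Longrightarrow> cderiv K (add_mset (FCnd x a A B) G) D \<Longrightarrow> cderiv K G D"
| condLstar: "K = CLstar \<Longrightarrow> RN a x \<in># G \<Longrightarrow> Lab x (Cond A B) \<in># G \<Longrightarrow>
     cderiv K G (add_mset (FEx a A) D) \<Longrightarrow> cderiv K (add_mset (FEx a A) (add_mset (FCnd x a A B) G)) D \<Longrightarrow>
     cderiv K G D"
| cndR: "RN c x \<in># G \<Longrightarrow> RS c a \<in># G \<Longrightarrow> FCnd x a A B \<in># D \<Longrightarrow>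
     cderiv K G (add_mset (FEx c A) D) \<Longrightarrow> cderiv K G (add_mset (FAll c (Impl A B)) D) \<Longrightarrow> cderiv K G D"
| refl: "cderiv K (add_mset (RS a a) G) D \<Longrightarrow> cderiv K G D"
| trans: "RS c b \<in># G \<Longrightarrow> RS b a \<in># G \<Longrightarrow> cderiv K (add_mset (RS c a) G) D \<Longrightarrow> cderiv K G D"
| subL: "RW x a \<in># G \<Longrightarrow> RS a b \<in># G \<Longrightarrow> cderiv K (add_mset (RW x b) G) D \<Longrightarrow> cderiv K G D"

lemma decomposableLE:
  assumes "decomposableL F"
  obtains (conj) x A B where "F = Lab x (Conj A B)"
    | (disj) x A B where "F = Lab x (Disj A B)"
    | (impl) x A B where "F = Lab x (Impl A B)"
    | (ex) a A where "F = FEx a A"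
    | (cnd) x a A B where "F = FCnd x a A B"
  using assms by (cases F rule: decomposableL.cases) auto

lemma decomposableRE:
  assumes "decomposableR F"
  obtains (conj) x A B where "F = Lab x (Conj A B)"
    | (disj) x A B where "F = Lab x (Disj A B)"
    | (impl) x A B where "F = Lab x (Impl A B)"
    | (cond) x A B where "F = Lab x (Cond A B)"
    | (all) a A where "F = FAll a A"
  using assms by (cases F rule: decomposableR.cases) auto

lemma premsL_decomposableL: "(GL, DL) \<in> premsL y F \<Longrightarrow> decomposableL F"
  by (induction y F rule: premsL.induct) auto

lemma premsR_decomposableR: "(GL, DL) \<in> premsR y F \<Longrightarrow> decomposableR F"
  by (induction y F rule: premsR.induct) auto

lemma premsL_relfree: "(GL, DL) \<in> premsL y F \<Longrightarrow> \<forall>\<phi>\<in>#DL. \<not> is_rel \<phi>"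
  by (induction y F rule: premsL.induct) auto

lemma premsR_relfree: "(GL, DL) \<in> premsR y F \<Longrightarrow> \<forall>\<phi>\<in>#DL. \<not> is_rel \<phi>"
  by (induction y F rule: premsR.induct) auto

lemma in_diff_decomposableL [simp]:
  "decomposableL F \<Longrightarrow> \<not> decomposableL Q \<Longrightarrow> Q \<in># M - {#F#} \<longleftrightarrow> Q \<in># M"
  by (metis in_diff_single_neq)

lemma in_diff_decomposableR [simp]:
  "decomposableR F \<Longrightarrow> \<not> decomposableR Q \<Longrightarrow> Q \<in># M - {#F#} \<longleftrightarrow> Q \<in># M"
  by (metis in_diff_single_neq)

section \<open>Renaming and weakening\<close>

fun rename_lf :: "(wlab \<Rightarrow> wlab) \<Rightarrow> (nlab \<Rightarrow> nlab) \<Rightarrow> 'p lf \<Rightarrow> 'p lf" where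
  "rename_lf f g (RN a x) = RN (g a) (f x)"
| "rename_lf f g (RW x a) = RW (f x) (g a)"
| "rename_lf f g (RS a b) = RS (g a) (g b)"
| "rename_lf f g (Lab x A) = Lab (f x) A"
| "rename_lf f g (FEx a A) = FEx (g a) A"
| "rename_lf f g (FAll a A) = FAll (g a) A"
| "rename_lf f g (FCnd x a A B) = FCnd (f x) (g a) A B"

definition labels :: "'p lf multiset \<Rightarrow> nat set" where
  "labels M = (\<Union>\<phi>\<in>set_mset M. wlabs \<phi> \<union> nlabs \<phi>)"

lemma finite_labels: "finite (labels M)"
proof -
  have "finite (wlabs \<phi> \<union> nlabs \<phi>)" for \<phi> :: "'p lf"
    by (cases \<phi>) auto
  then show ?thesis
    unfolding labels_def by auto
qed

lemma fresh_label:
  assumes "finite S"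
  obtains y :: nat where "y \<notin> S" "y \<notin> labels M"
proof -
  have "finite (S \<union> labels M)"
    using assms finite_labels by blast
  then show thesis
    using ex_new_if_finite[OF infinite_UNIV_nat] that by blast
qed

lemma is_rel_rename_lf [simp]: "is_rel (rename_lf f g \<phi>) = is_rel \<phi>"
  by (cases \<phi>) auto

lemma decomposableL_rename_lf [simp]: "decomposableL (rename_lf f g F) = decomposableL F"
  by (cases F rule: decomposableL.cases) auto

lemma decomposableR_rename_lf [simp]: "decomposableR (rename_lf f g F) = decomposableR F"
  by (cases F rule: decomposableR.cases) auto

lemma rename_lf_id: "rename_lf id id = id"
proof
  fix \<phi> :: "'p lf"
  show "rename_lf id id \<phi> = id \<phi>"
    by (cases \<phi>) auto
qed

lemma in_image_rename_lf: "\<phi> \<in># M \<Longrightarrow> rename_lf f g \<phi> \<in># image_mset (rename_lf f g) M"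
  by simp

lemma image_rename_lf_cong:
  assumes "\<And>\<phi>. \<phi> \<in># M \<Longrightarrow> (\<forall>x\<in>wlabs \<phi>. f x = f' x) \<and> (\<forall>a\<in>nlabs \<phi>. g a = g' a)"
  shows "image_mset (rename_lf f g) M = image_mset (rename_lf f' g') M"
proof (rule image_mset_cong)
  fix \<phi> assume "\<phi> \<in># M"
  with assms show "rename_lf f g \<phi> = rename_lf f' g' \<phi>"
    by (cases \<phi>) auto
qed

lemma image_rename_lf_fresh:
  "y0 \<notin> labels M \<Longrightarrow> image_mset (rename_lf (f(y0 := y)) (g(y0 := y))) M = image_mset (rename_lf f g) M"
  by (rule image_rename_lf_cong) (auto simp: labels_def)

(* World and neighbourhood labels are both nat, so updating both renamings at y0 moves the
   eigenlabel whatever its sort. *)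
lemma premsL_rename_lf:
  assumes "y0 \<notin> labels {#F#}"
  shows "premsL y (rename_lf f g F) =
    (\<lambda>(GL, DL). (image_mset (rename_lf (f(y0 := y)) (g(y0 := y))) GL,
                 image_mset (rename_lf (f(y0 := y)) (g(y0 := y))) DL)) ` premsL y0 F"
  using assms by (cases F rule: decomposableL.cases) (auto simp: labels_def)

lemma premsR_rename_lf:
  assumes "y0 \<notin> labels {#F#}"
  shows "premsR y (rename_lf f g F) =
    (\<lambda>(GL, DL). (image_mset (rename_lf (f(y0 := y)) (g(y0 := y))) GL,
                 image_mset (rename_lf (f(y0 := y)) (g(y0 := y))) DL)) ` premsR y0 F"
  using assms by (cases F rule: decomposableR.cases) (auto simp: labels_def)

lemma premsL_rename_cderiv:
  assumes "finite S"
    and prems: "\<And>y GL DL f g. y \<notin> S \<Longrightarrow> (GL, DL) \<in> premsL y F \<Longrightarrow>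
      cderiv K (image_mset (rename_lf f g) (GL + G)) (image_mset (rename_lf f g) (DL + D))"
    and "(GL', DL') \<in> premsL y (rename_lf f g F)"
  shows "cderiv K (GL' + image_mset (rename_lf f g) G) (DL' + image_mset (rename_lf f g) D)"
proof -
  obtain y0 where "y0 \<notin> S" "y0 \<notin> labels (add_mset F (G + D))"
    using \<open>finite S\<close> by (rule fresh_label)
  then have fresh: "y0 \<notin> S" "y0 \<notin> labels {#F#}" "y0 \<notin> labels G" "y0 \<notin> labels D"
    by (auto simp: labels_def)
  obtain GL DL where prem: "(GL, DL) \<in> premsL y0 F"
    and GL': "GL' = image_mset (rename_lf (f(y0 := y)) (g(y0 := y))) GL"
    and DL': "DL' = image_mset (rename_lf (f(y0 := y)) (g(y0 := y))) DL"
    using premsL_rename_lf[OF fresh(2), of y f g] assms(3) by auto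
  have "cderiv K (GL' + image_mset (rename_lf (f(y0 := y)) (g(y0 := y))) G)
      (DL' + image_mset (rename_lf (f(y0 := y)) (g(y0 := y))) D)"
    using prems[OF fresh(1) prem, of "f(y0 := y)" "g(y0 := y)"] by (simp only: GL' DL' image_mset_union)
  then show ?thesis
    by (simp only: image_rename_lf_fresh[OF fresh(3)] image_rename_lf_fresh[OF fresh(4)])
qed

lemma premsR_rename_cderiv:
  assumes "finite S"
    and prems: "\<And>y GL DL f g. y \<notin> S \<Longrightarrow> (GL, DL) \<in> premsR y F \<Longrightarrow>
      cderiv K (image_mset (rename_lf f g) (GL + G)) (image_mset (rename_lf f g) (DL + D))"
    and "(GL', DL') \<in> premsR y (rename_lf f g F)"
  shows "cderiv K (GL' + image_mset (rename_lf f g) G) (DL' + image_mset (rename_lf f g) D)"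
proof -
  obtain y0 where "y0 \<notin> S" "y0 \<notin> labels (add_mset F (G + D))"
    using \<open>finite S\<close> by (rule fresh_label)
  then have fresh: "y0 \<notin> S" "y0 \<notin> labels {#F#}" "y0 \<notin> labels G" "y0 \<notin> labels D"
    by (auto simp: labels_def)
  obtain GL DL where prem: "(GL, DL) \<in> premsR y0 F"
    and GL': "GL' = image_mset (rename_lf (f(y0 := y)) (g(y0 := y))) GL"
    and DL': "DL' = image_mset (rename_lf (f(y0 := y)) (g(y0 := y))) DL"
    using premsR_rename_lf[OF fresh(2), of y f g] assms(3) by auto
  have "cderiv K (GL' + image_mset (rename_lf (f(y0 := y)) (g(y0 := y))) G)
      (DL' + image_mset (rename_lf (f(y0 := y)) (g(y0 := y))) D)"
    using prems[OF fresh(1) prem, of "f(y0 := y)" "g(y0 := y)"] by (simp only: GL' DL' image_mset_union)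
  then show ?thesis
    by (simp only: image_rename_lf_fresh[OF fresh(3)] image_rename_lf_fresh[OF fresh(4)])
qed

lemma cderiv_rename:
  "cderiv K G D \<Longrightarrow> cderiv K (image_mset (rename_lf f g) G) (image_mset (rename_lf f g) D)"
proof (induction arbitrary: f g rule: cderiv.induct)
  case (init x p G D)
  show ?case
    by (rule cderiv.init[where x = "f x" and p = p])
      (use in_image_rename_lf[OF init(1), of f g] in_image_rename_lf[OF init(2), of f g] init(3) in auto)
next
  case (botL x G D)
  show ?case
    by (rule cderiv.botL[where x = "f x"]) (use in_image_rename_lf[OF botL(1), of f g] botL(2) in auto)
next
  case (decompL F S G D)
  show ?case
    by (simp, rule cderiv.decompL[where S = "{}"])
      (use decompL.hyps(1) premsL_rename_cderiv[OF decompL.hyps(2) decompL.IH] in simp_all)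
next
  case (decompR F S G D)
  show ?case
    by (simp, rule cderiv.decompR[where S = "{}"])
      (use decompR.hyps(1) premsR_rename_cderiv[OF decompR.hyps(2) decompR.IH] in simp_all)
next
  case (allL x a G A D)
  show ?case
    by (rule cderiv.allL[where x = "f x" and a = "g a" and A = A])
      (use in_image_rename_lf[OF allL(1), of f g] in_image_rename_lf[OF allL(2), of f g] allL.IH[of f g]
        in simp_all)
next
  case (exR x a G A D)
  show ?case
    by (rule cderiv.exR[where x = "f x" and a = "g a" and A = A])
      (use in_image_rename_lf[OF exR(1), of f g] in_image_rename_lf[OF exR(2), of f g] exR.IH[of f g]
        in simp_all)
next
  case (condL a x G A B D)
  show ?case
    by (rule cderiv.condL[where a = "g a" and x = "f x" and A = A and B = B])
      (use in_image_rename_lf[OF condL(2), of f g] in_image_rename_lf[OF condL(3), of f g]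
        condL(1) condL.IH[of f g] in simp_all)
next
  case (condLstar a x G A B D)
  show ?case
    by (rule cderiv.condLstar[where a = "g a" and x = "f x" and A = A and B = B])
      (use in_image_rename_lf[OF condLstar(2), of f g] in_image_rename_lf[OF condLstar(3), of f g]
        condLstar(1) condLstar.IH[of f g] in simp_all)
next
  case (cndR c x G a A B D)
  show ?case
    by (rule cderiv.cndR[where c = "g c" and x = "f x" and a = "g a" and A = A and B = B])
      (use in_image_rename_lf[OF cndR(1), of f g] in_image_rename_lf[OF cndR(2), of f g]
        in_image_rename_lf[OF cndR(3), of f g] cndR.IH[of f g] in simp_all)
next
  case (refl a G D)
  show ?case
    by (rule cderiv.refl[where a = "g a"]) (use refl.IH[of f g] in simp)
next
  case (trans c b G a D)
  show ?case
    by (rule cderiv.trans[where c = "g c" and b = "g b" and a = "g a"])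
      (use in_image_rename_lf[OF trans(1), of f g] in_image_rename_lf[OF trans(2), of f g] trans.IH[of f g]
        in simp_all)
next
  case (subL x a G b D)
  show ?case
    by (rule cderiv.subL[where x = "f x" and a = "g a" and b = "g b"])
      (use in_image_rename_lf[OF subL(1), of f g] in_image_rename_lf[OF subL(2), of f g] subL.IH[of f g]
        in simp_all)
qed

lemma premsL_any_label:
  assumes "finite S"
    and prems: "\<And>y GL DL. y \<notin> S \<Longrightarrow> (GL, DL) \<in> premsL y F \<Longrightarrow> cderiv K (GL + G) (DL + D)"
    and "(GL, DL) \<in> premsL y F"
  shows "cderiv K (GL + G) (DL + D)"
  using premsL_rename_cderiv[OF \<open>finite S\<close> cderiv_rename[OF prems],
      where GL' = GL and DL' = DL and y = y and f = id and g = id] assms(3)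
  by (simp add: rename_lf_id)

lemma premsR_any_label:
  assumes "finite S"
    and prems: "\<And>y GL DL. y \<notin> S \<Longrightarrow> (GL, DL) \<in> premsR y F \<Longrightarrow> cderiv K (GL + G) (DL + D)"
    and "(GL, DL) \<in> premsR y F"
  shows "cderiv K (GL + G) (DL + D)"
  using premsR_rename_cderiv[OF \<open>finite S\<close> cderiv_rename[OF prems],
      where GL' = GL and DL' = DL and y = y and f = id and g = id] assms(3)
  by (simp add: rename_lf_id)

lemma cderiv_weaken:
  "cderiv K G D \<Longrightarrow> \<forall>\<phi>\<in>#D'. \<not> is_rel \<phi> \<Longrightarrow> cderiv K (G + G') (D + D')"
proof (induction rule: cderiv.induct)
  case (init x p G D)
  show ?case by (rule cderiv.init[where x = x and p = p]) (use init in auto)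
next
  case (botL x G D)
  show ?case by (rule cderiv.botL[where x = x]) (use botL in auto)
next
  case (decompL F S G D)
  show ?case
    by (simp, rule cderiv.decompL[OF decompL.hyps(1,2)])
      (use decompL.IH decompL.prems in \<open>simp add: add.assoc\<close>)
next
  case (decompR F S G D)
  show ?case
    by (simp, rule cderiv.decompR[OF decompR.hyps(1,2)])
      (use decompR.IH decompR.prems in \<open>simp add: add.assoc\<close>)
next
  case (allL x a G A D)
  show ?case by (rule cderiv.allL[where x = x and a = a and A = A]) (use allL in auto)
next
  case (exR x a G A D)
  show ?case by (rule cderiv.exR[where x = x and a = a and A = A]) (use exR in auto)
next
  case (condL a x G A B D)
  show ?case by (rule cderiv.condL[where x = x and a = a and A = A and B = B]) (use condL in auto)
next
  case (condLstar a x G A B D)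
  show ?case by (rule cderiv.condLstar[where x = x and a = a and A = A and B = B]) (use condLstar in auto)
next
  case (cndR c x G a A B D)
  show ?case by (rule cderiv.cndR[where c = c and x = x and a = a and A = A and B = B]) (use cndR in auto)
next
  case (refl a G D)
  show ?case by (rule cderiv.refl[where a = a]) (use refl in auto)
next
  case (trans c b G a D)
  show ?case by (rule cderiv.trans[where c = c and b = b and a = a]) (use trans in auto)
next
  case (subL x a G b D)
  show ?case by (rule cderiv.subL[where x = x and a = a and b = b]) (use subL in auto)
qed

lemma cderiv_weakenL: "cderiv K G D \<Longrightarrow> cderiv K (add_mset \<phi> G) D"
  using cderiv_weaken[of K G D "{#}" "{#\<phi>#}"] by simp

section \<open>Cofinite versus fresh eigenlabels\<close>

lemma deriv_decompL:
  assumes "decomposableL F" and "finite S"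
    and prems: "\<And>y GL DL. y \<notin> S \<Longrightarrow> (GL, DL) \<in> premsL y F \<Longrightarrow> deriv K (GL + G) (DL + D)"
  shows "deriv K (add_mset F G) D"
proof -
  obtain y where y: "y \<notin> S" "y \<notin> labels (add_mset F (G + D))"
    using assms(2) by (rule fresh_label)
  from assms(1) show ?thesis
  proof (cases rule: decomposableLE)
    case (conj x A B)
    then show ?thesis
      using prems[OF y(1), of "{#Lab x A, Lab x B#}" "{#}"] by (simp add: deriv.conjL)
  next
    case (disj x A B)
    then show ?thesis
      using prems[OF y(1), of "{#Lab x A#}" "{#}"] prems[OF y(1), of "{#Lab x B#}" "{#}"]
      by (simp add: deriv.disjL)
  next
    case (impl x A B)
    then show ?thesis
      using prems[OF y(1), of "{#}" "{#Lab x A#}"] prems[OF y(1), of "{#Lab x B#}" "{#}"]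
      by (simp add: deriv.implL)
  next
    case (ex a A)
    show ?thesis
      unfolding ex by (rule deriv.exL[where x = y]) (use y ex prems[OF y(1), of "{#RW y a, Lab y A#}" "{#}"] in
        \<open>auto simp: wl_seq_def labels_def add_mset_commute\<close>)
  next
    case (cnd x a A B)
    show ?thesis
      unfolding cnd by (rule deriv.cndL[where c = y])
        (use y cnd prems[OF y(1), of "{#RN y x, RS y a, FEx y A, FAll y (Impl A B)#}" "{#}"] in
          \<open>auto simp: nl_seq_def labels_def add_mset_commute\<close>)
  qed
qed

lemma deriv_decompR:
  assumes "decomposableR F" and "finite S"
    and prems: "\<And>y GL DL. y \<notin> S \<Longrightarrow> (GL, DL) \<in> premsR y F \<Longrightarrow> deriv K (GL + G) (DL + D)"
  shows "deriv K G (add_mset F D)"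
proof -
  obtain y where y: "y \<notin> S" "y \<notin> labels (add_mset F (G + D))"
    using assms(2) by (rule fresh_label)
  from assms(1) show ?thesis
  proof (cases rule: decomposableRE)
    case (conj x A B)
    then show ?thesis
      using prems[OF y(1), of "{#}" "{#Lab x A#}"] prems[OF y(1), of "{#}" "{#Lab x B#}"]
      by (simp add: deriv.conjR)
  next
    case (disj x A B)
    then show ?thesis
      using prems[OF y(1), of "{#}" "{#Lab x A, Lab x B#}"] by (simp add: deriv.disjR)
  next
    case (impl x A B)
    then show ?thesis
      using prems[OF y(1), of "{#Lab x A#}" "{#Lab x B#}"] by (simp add: deriv.implR)
  next
    case (cond x A B)
    show ?thesis
      unfolding cond
      by (rule deriv.condR[where a = y])
        (use y cond prems[OF y(1), of "{#RN y x, FEx y A#}" "{#FCnd x y A B#}"] in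
          \<open>auto simp: nl_seq_def labels_def add_mset_commute\<close>)
  next
    case (all a A)
    show ?thesis
      unfolding all by (rule deriv.allR[where x = y]) (use y all prems[OF y(1), of "{#RW y a#}" "{#Lab y A#}"] in
        \<open>auto simp: wl_seq_def labels_def\<close>)
  qed
qed

lemma cderiv_rename_world:
  assumes "x \<notin> wl_seq G D" and "cderiv K (M + G) (N + D)"
  shows "cderiv K (image_mset (rename_lf (id(x := y)) id) M + G) (image_mset (rename_lf (id(x := y)) id) N + D)"
proof -
  have "image_mset (rename_lf (id(x := y)) id) G = image_mset (rename_lf id id) G"
    and "image_mset (rename_lf (id(x := y)) id) D = image_mset (rename_lf id id) D"
    using assms(1) by (auto simp: wl_seq_def intro!: image_rename_lf_cong)
  with cderiv_rename[OF assms(2), of "id(x := y)" id] show ?thesis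
    by (simp add: rename_lf_id)
qed

lemma cderiv_rename_nbhd:
  assumes "a \<notin> nl_seq G D" and "cderiv K (M + G) (N + D)"
  shows "cderiv K (image_mset (rename_lf id (id(a := b))) M + G) (image_mset (rename_lf id (id(a := b))) N + D)"
proof -
  have "image_mset (rename_lf id (id(a := b))) G = image_mset (rename_lf id id) G"
    and "image_mset (rename_lf id (id(a := b))) D = image_mset (rename_lf id id) D"
    using assms(1) by (auto simp: nl_seq_def intro!: image_rename_lf_cong)
  with cderiv_rename[OF assms(2), of id "id(a := b)"] show ?thesis
    by (simp add: rename_lf_id)
qed

lemma deriv_imp_cderiv: "deriv K G D \<Longrightarrow> cderiv K G D"
proof (induction rule: deriv.induct)
  case (init D x p G)
  show ?case
    by (rule cderiv.init[where x = x and p = p]) (use init in auto)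
next
  case (botL D x G)
  show ?case
    by (rule cderiv.botL[where x = x]) (use botL in auto)
next
  case (conjL x A B G D)
  show ?case
    by (rule cderiv.decompL[where S = "{}"]) (use conjL.IH in auto)
next
  case (conjR G x A D B)
  show ?case
    by (rule cderiv.decompR[where S = "{}"]) (use conjR.IH in auto)
next
  case (disjL x A G D B)
  show ?case
    by (rule cderiv.decompL[where S = "{}"]) (use disjL.IH in auto)
next
  case (disjR G x A B D)
  show ?case
    by (rule cderiv.decompR[where S = "{}"]) (use disjR.IH in auto)
next
  case (implL G x A D B)
  show ?case
    by (rule cderiv.decompL[where S = "{}"]) (use implL.IH in auto)
next
  case (implR x A G B D)
  show ?case
    by (rule cderiv.decompR[where S = "{}"]) (use implR.IH in auto)
next
  case (allL x A a G D)
  show ?case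
    by (rule cderiv.allL[where x = x and a = a and A = A])
      (use allL.IH in \<open>simp_all add: add_mset_commute\<close>)
next
  case (allR x G a A D)
  have fresh: "x \<notin> wl_seq G D"
    using allR.hyps(1) by (auto simp: wl_seq_def)
  show ?case
    by (rule cderiv.decompR[where S = "{}"])
      (use cderiv_rename_world[OF fresh, where M = "{#RW x a#}" and N = "{#Lab x A#}"] allR.IH in auto)
next
  case (exL x a A G D)
  have fresh: "x \<notin> wl_seq G D"
    using exL.hyps(1) by (auto simp: wl_seq_def)
  show ?case
    by (rule cderiv.decompL[where S = "{}"])
      (use cderiv_rename_world[OF fresh, where M = "{#RW x a, Lab x A#}" and N = "{#}"] exL.IH in auto)
next
  case (exR x a G A D)
  show ?case
    by (rule cderiv.exR[where x = x and a = a and A = A])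
      (use exR.IH in \<open>simp_all add: add_mset_commute\<close>)
next
  case (condR a G x A B D)
  have fresh: "a \<notin> nl_seq G D"
    using condR.hyps(1) by (auto simp: nl_seq_def)
  show ?case
    by (rule cderiv.decompR[where S = "{}"])
      (use cderiv_rename_nbhd[OF fresh, where M = "{#RN a x, FEx a A#}" and N = "{#FCnd x a A B#}"] condR.IH in auto)
next
  case (condL a x A B G D)
  show ?case
    by (rule cderiv.condL[where a = a and x = x and A = A and B = B])
      (use condL in \<open>simp_all add: add_mset_commute\<close>)
next
  case (condLstar a x A B G D)
  show ?case
    by (rule cderiv.condLstar[where a = a and x = x and A = A and B = B])
      (use condLstar in \<open>simp_all add: add_mset_commute\<close>)
next
  case (cndR c x a G A B D)
  show ?case
    by (rule cderiv.cndR[where c = c and x = x and a = a and A = A and B = B])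
      (use cndR.IH in \<open>simp_all add: add_mset_commute\<close>)
next
  case (cndL c x a A B G D)
  have fresh: "c \<notin> nl_seq G D" "c \<noteq> a"
    using cndL.hyps(1) by (auto simp: nl_seq_def)
  show ?case
    by (rule cderiv.decompL[where S = "{}"])
      (use cderiv_rename_nbhd[OF fresh(1), where M = "{#RN c x, RS c a, FEx c A, FAll c (Impl A B)#}" and N = "{#}"]
        cndL.IH fresh(2) in auto)
next
  case (refl a G D)
  show ?case
    by (rule cderiv.refl[where a = a]) (rule refl.IH)
next
  case (trans c a b G D)
  show ?case
    by (rule cderiv.trans[where c = c and b = b and a = a])
      (use trans.IH in \<open>simp_all add: add_mset_commute\<close>)
next
  case (subL x a b G D)
  show ?case
    by (rule cderiv.subL[where x = x and a = a and b = b])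
      (use subL.IH in \<open>simp_all add: add_mset_commute\<close>)
qed

lemma cderiv_imp_deriv: "cderiv K G D \<Longrightarrow> deriv K G D"
proof (induction rule: cderiv.induct)
  case (init x p G D)
  obtain G0 D0 where "G = add_mset (Lab x (At p)) G0" and "D = add_mset (Lab x (At p)) D0"
    using init.hyps(1,2) by (metis multi_member_split)
  with init.hyps(3) show ?case
    by (simp add: deriv.init)
next
  case (botL x G D)
  obtain G0 where "G = add_mset (Lab x Bot) G0"
    using botL.hyps(1) by (metis multi_member_split)
  with botL.hyps(2) show ?case
    by (simp add: deriv.botL)
next
  case (decompL F S G D)
  show ?case
    by (rule deriv_decompL[OF decompL.hyps(1,2) decompL.IH])
next
  case (decompR F S G D)
  show ?case
    by (rule deriv_decompR[OF decompR.hyps(1,2) decompR.IH])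
next
  case (allL x a G A D)
  obtain G0 where G: "G = add_mset (RW x a) (add_mset (FAll a A) G0)"
    using allL.hyps(1,2) by (rule multi_member_split2) simp
  show ?case
    using deriv.allL[of K x A a G0 D] allL.IH by (simp add: G add_mset_commute)
next
  case (exR x a G A D)
  obtain G0 D0 where G: "G = add_mset (RW x a) G0" and D: "D = add_mset (FEx a A) D0"
    using exR.hyps(1,2) by (metis multi_member_split)
  show ?case
    using deriv.exR[of K x a G0 A D0] exR.IH by (simp add: G D add_mset_commute)
next
  case (condL a x G A B D)
  obtain G0 where G: "G = add_mset (RN a x) (add_mset (Lab x (Cond A B)) G0)"
    using condL.hyps(2,3) by (rule multi_member_split2) simp
  show ?case
    using deriv.condL[of K a x A B G0 D] condL.hyps(1) condL.IH by (simp add: G)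
next
  case (condLstar a x G A B D)
  obtain G0 where G: "G = add_mset (RN a x) (add_mset (Lab x (Cond A B)) G0)"
    using condLstar.hyps(2,3) by (rule multi_member_split2) simp
  show ?case
    using deriv.condLstar[of K a x A B G0 D] condLstar.hyps(1) condLstar.IH by (simp add: G)
next
  case (cndR c x G a A B D)
  obtain G0 where G: "G = add_mset (RN c x) (add_mset (RS c a) G0)"
    using cndR.hyps(1,2) by (rule multi_member_split2) simp
  obtain D0 where D: "D = add_mset (FCnd x a A B) D0"
    using cndR.hyps(3) by (metis multi_member_split)
  show ?case
    using deriv.cndR[of K c x a G0 A B D0] cndR.IH by (simp add: G D add_mset_commute)
next
  case (refl a G D)
  then show ?case
    by (simp add: deriv.refl)
next
  case (trans c b G a D)
  show ?case
  proof (cases "c = b \<and> b = a")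
    \<comment> \<open>then both premises of Tr are the single atom a \<subseteq> a, and Ref takes its place\<close>
    case True
    then show ?thesis
      using trans.IH deriv.refl[of K a G D] by simp
  next
    case False
    obtain G0 where G: "G = add_mset (RS c b) (add_mset (RS b a) G0)"
      using trans.hyps(1,2) by (rule multi_member_split2) (use False in simp)
    show ?thesis
      using deriv.trans[of K c a b G0 D] trans.IH by (simp add: G add_mset_commute)
  qed
next
  case (subL x a G b D)
  obtain G0 where G: "G = add_mset (RW x a) (add_mset (RS a b) G0)"
    using subL.hyps(1,2) by (rule multi_member_split2) simp
  show ?case
    using deriv.subL[of K x a b G0 D] subL.IH by (simp add: G add_mset_commute)
qed

lemma deriv_iff_cderiv: "deriv K G D \<longleftrightarrow> cderiv K G D"
  using deriv_imp_cderiv cderiv_imp_deriv by blast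

section \<open>Invertibility\<close>

lemma cderiv_invertL:
  assumes inv: "(GL, DL) \<in> premsL y F"
  shows "cderiv K G D \<Longrightarrow> F \<in># G \<Longrightarrow> cderiv K (GL + (G - {#F#})) (DL + D)"
proof (induction rule: cderiv.induct)
  note dec = premsL_decomposableL[OF inv] and rf = premsL_relfree[OF inv]
  {
    case (init x p G D)
    show ?case
      by (rule cderiv.init[where x = x and p = p]) (use init dec rf in auto)
  next
    case (botL x G D)
    show ?case
      by (rule cderiv.botL[where x = x]) (use botL dec rf in auto)
  next
    case (decompL F' S G D)
    show ?case
    proof (cases "F' = F")
      case True
      then show ?thesis
        using premsL_any_label[OF decompL.hyps(2,3) inv] by simp
    next
      case False
      then obtain G0 where G: "G = add_mset F G0"
        using decompL.prems by (auto dest: multi_member_split)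
      have "cderiv K (add_mset F' (GL + G0)) (DL + D)"
        by (rule cderiv.decompL[OF decompL.hyps(1,2)]) (use decompL.IH in \<open>simp add: G ac_simps\<close>)
      then show ?thesis
        using False by (simp add: G)
    qed
  next
    case (decompR F' S G D)
    obtain G0 where G: "G = add_mset F G0"
      using decompR.prems by (auto dest: multi_member_split)
    have "cderiv K (GL + G0) (add_mset F' (DL + D))"
      by (rule cderiv.decompR[OF decompR.hyps(1,2)]) (use decompR.IH in \<open>simp add: G ac_simps\<close>)
    then show ?case
      by (simp add: G)
  next
    case (allL x a G A D)
    show ?case
      by (rule cderiv.allL[where x = x and a = a and A = A]) (use allL dec in auto)
  next
    case (exR x a G A D)
    show ?case
      by (rule cderiv.exR[where x = x and a = a and A = A]) (use exR dec in auto)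
  next
    case (condL a x G A B D)
    show ?case
      by (rule cderiv.condL[where x = x and a = a and A = A and B = B]) (use condL dec in auto)
  next
    case (condLstar a x G A B D)
    show ?case
      by (rule cderiv.condLstar[where x = x and a = a and A = A and B = B]) (use condLstar dec in auto)
  next
    case (cndR c x G a A B D)
    show ?case
      by (rule cderiv.cndR[where c = c and x = x and a = a and A = A and B = B]) (use cndR dec in auto)
  next
    case (refl a G D)
    show ?case
      by (rule cderiv.refl[where a = a]) (use refl dec in auto)
  next
    case (trans c b G a D)
    show ?case
      by (rule cderiv.trans[where c = c and b = b and a = a]) (use trans dec in auto)
  next
    case (subL x a G b D)
    show ?case
      by (rule cderiv.subL[where x = x and a = a and b = b]) (use subL dec in auto)
  }
qed

lemma cderiv_invertR:
  assumes inv: "(GL, DL) \<in> premsR y F"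
  shows "cderiv K G D \<Longrightarrow> F \<in># D \<Longrightarrow> cderiv K (GL + G) (DL + (D - {#F#}))"
proof (induction rule: cderiv.induct)
  note dec = premsR_decomposableR[OF inv] and rf = premsR_relfree[OF inv]
  {
    case (init x p G D)
    show ?case
      by (rule cderiv.init[where x = x and p = p]) (use init dec rf in \<open>auto dest!: in_diffD\<close>)
  next
    case (botL x G D)
    show ?case
      by (rule cderiv.botL[where x = x]) (use botL rf in \<open>auto dest!: in_diffD\<close>)
  next
    case (decompL F' S G D)
    have "cderiv K (add_mset F' (GL + G)) (DL + (D - {#F#}))"
      by (rule cderiv.decompL[OF decompL.hyps(1,2)])
      (use decompL.IH decompL.prems in \<open>simp add: ac_simps\<close>)
    then show ?case
      by simp
  next
    case (decompR F' S G D)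
    show ?case
    proof (cases "F' = F")
      case True
      then show ?thesis
        using premsR_any_label[OF decompR.hyps(2,3) inv] by simp
    next
      case False
      then obtain D0 where D: "D = add_mset F D0"
        using decompR.prems by (auto dest: multi_member_split)
      have "cderiv K (GL + G) (add_mset F' (DL + D0))"
        by (rule cderiv.decompR[OF decompR.hyps(1,2)]) (use decompR.IH in \<open>simp add: D ac_simps\<close>)
      then show ?thesis
        using False by (simp add: D)
    qed
  next
    case (allL x a G A D)
    show ?case
      by (rule cderiv.allL[where x = x and a = a and A = A]) (use allL in auto)
  next
    case (exR x a G A D)
    show ?case
      by (rule cderiv.exR[where x = x and a = a and A = A]) (use exR dec in auto)
  next
    case (condL a x G A B D)
    show ?case
      by (rule cderiv.condL[where x = x and a = a and A = A and B = B]) (use condL in auto)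
  next
    case (condLstar a x G A B D)
    show ?case
      by (rule cderiv.condLstar[where x = x and a = a and A = A and B = B]) (use condLstar in auto)
  next
    case (cndR c x G a A B D)
    show ?case
      by (rule cderiv.cndR[where c = c and x = x and a = a and A = A and B = B]) (use cndR dec in auto)
  next
    case (refl a G D)
    show ?case
      by (rule cderiv.refl[where a = a]) (use refl in auto)
  next
    case (trans c b G a D)
    show ?case
      by (rule cderiv.trans[where c = c and b = b and a = a]) (use trans in auto)
  next
    case (subL x a G b D)
    show ?case
      by (rule cderiv.subL[where x = x and a = a and b = b]) (use subL in auto)
  }
qed

lemma cderiv_invert_FEx:
  "cderiv K (add_mset (FEx a A) G) D \<Longrightarrow> cderiv K (add_mset (RW z a) (add_mset (Lab z A) G)) D"
  using cderiv_invertL[of "{#RW z a, Lab z A#}" "{#}" z "FEx a A" K "add_mset (FEx a A) G" D] by simp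

lemma cderiv_invert_FCnd:
  "cderiv K (add_mset (FCnd x a A B) G) D \<Longrightarrow>
   cderiv K (add_mset (RN c x) (add_mset (RS c a) (add_mset (FEx c A) (add_mset (FAll c (Impl A B)) G)))) D"
  using cderiv_invertL[of "{#RN c x, RS c a, FEx c A, FAll c (Impl A B)#}" "{#}" c "FCnd x a A B" K
      "add_mset (FCnd x a A B) G" D]
  by simp

section \<open>Contraction\<close>

(* Cond weighs more than Impl, so that the L| premise c \<Vdash>\<forall> A \<rightarrow> B is lighter than
   x \<Vdash>_a A|B, which is lighter than x : A > B. *)
fun fm_weight :: "'p fm \<Rightarrow> nat" where
  "fm_weight (At p) = 0"
| "fm_weight Bot = 0"
| "fm_weight (Conj A B) = fm_weight A + fm_weight B + 1"
| "fm_weight (Disj A B) = fm_weight A + fm_weight B + 1"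
| "fm_weight (Impl A B) = fm_weight A + fm_weight B + 1"
| "fm_weight (Cond A B) = fm_weight A + fm_weight B + 3"

fun weight :: "'p lf \<Rightarrow> nat" where
  "weight (Lab x A) = 2 * fm_weight A"
| "weight (FEx a A) = 2 * fm_weight A + 1"
| "weight (FAll a A) = 2 * fm_weight A + 1"
| "weight (FCnd x a A B) = 2 * (fm_weight A + fm_weight B) + 4"
| "weight _ = 0"

lemma premsL_weight: "(GL, DL) \<in> premsL y F \<Longrightarrow> \<phi> \<in># GL + DL \<Longrightarrow> weight \<phi> < weight F"
  by (induction y F rule: premsL.induct) auto

lemma premsR_weight: "(GL, DL) \<in> premsR y F \<Longrightarrow> \<phi> \<in># GL + DL \<Longrightarrow> weight \<phi> < weight F"
  by (induction y F rule: premsR.induct) auto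

definition contractible :: "calc \<Rightarrow> 'p lf \<Rightarrow> bool" where
  "contractible K \<phi> \<longleftrightarrow>
     (\<forall>G D. cderiv K (add_mset \<phi> (add_mset \<phi> G)) D \<longrightarrow> cderiv K (add_mset \<phi> G) D) \<and>
     (\<forall>G D. cderiv K G (add_mset \<phi> (add_mset \<phi> D)) \<longrightarrow> cderiv K G (add_mset \<phi> D))"

lemma cderiv_contract_mset:
  assumes "\<And>\<phi>. \<phi> \<in># GL + DL \<Longrightarrow> contractible K \<phi>"
    and "cderiv K (GL + GL + G) (DL + DL + D)"
  shows "cderiv K (GL + G) (DL + D)"
proof -
  have contracted_left: "cderiv K (GL + G) (DL + DL + D)"
  proof (rule contract_mset[where P = "\<lambda>H. cderiv K H (DL + DL + D)", OF _ assms(2)])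
    fix x H assume "x \<in># GL" and "cderiv K (add_mset x (add_mset x H)) (DL + DL + D)"
    moreover from \<open>x \<in># GL\<close> have "contractible K x"
      by (simp add: assms(1))
    ultimately show "cderiv K (add_mset x H) (DL + DL + D)"
      unfolding contractible_def by blast
  qed
  show ?thesis
  proof (rule contract_mset[where P = "\<lambda>H. cderiv K (GL + G) H", OF _ contracted_left])
    fix x H assume "x \<in># DL" and "cderiv K (GL + G) (add_mset x (add_mset x H))"
    moreover from \<open>x \<in># DL\<close> have "contractible K x"
      by (simp add: assms(1))
    ultimately show "cderiv K (GL + G) (add_mset x H)"
      unfolding contractible_def by blast
  qed
qed

lemma cderiv_decompL_absorb:
  fixes F :: "'p lf"
  assumes lighter: "\<And>\<psi> :: 'p lf. weight \<psi> < weight F \<Longrightarrow> contractible K \<psi>"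
    and "decomposableL F" and "finite S"
    and prems: "\<And>y GL DL. y \<notin> S \<Longrightarrow> (GL, DL) \<in> premsL y F \<Longrightarrow>
      cderiv K (GL + add_mset F G) (DL + D)"
  shows "cderiv K (add_mset F G) D"
proof (rule cderiv.decompL[OF assms(2,3)])
  fix y GL DL assume y: "y \<notin> S" and prem: "(GL, DL) \<in> premsL y F"
  from cderiv_invertL[OF prem prems[OF y prem]]
  have "cderiv K (GL + GL + G) (DL + DL + D)"
    by (simp add: ac_simps)
  moreover have "contractible K \<phi>" if "\<phi> \<in># GL + DL" for \<phi>
    by (rule lighter[OF premsL_weight[OF prem that]])
  ultimately show "cderiv K (GL + G) (DL + D)"
    by (rule cderiv_contract_mset[rotated])
qed

lemma cderiv_decompR_absorb:
  fixes F :: "'p lf"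
  assumes lighter: "\<And>\<psi> :: 'p lf. weight \<psi> < weight F \<Longrightarrow> contractible K \<psi>"
    and "decomposableR F" and "finite S"
    and prems: "\<And>y GL DL. y \<notin> S \<Longrightarrow> (GL, DL) \<in> premsR y F \<Longrightarrow>
      cderiv K (GL + G) (DL + add_mset F D)"
  shows "cderiv K G (add_mset F D)"
proof (rule cderiv.decompR[OF assms(2,3)])
  fix y GL DL assume y: "y \<notin> S" and prem: "(GL, DL) \<in> premsR y F"
  from cderiv_invertR[OF prem prems[OF y prem]]
  have "cderiv K (GL + GL + G) (DL + DL + D)"
    by (simp add: ac_simps)
  moreover have "contractible K \<phi>" if "\<phi> \<in># GL + DL" for \<phi>
    by (rule lighter[OF premsR_weight[OF prem that]])
  ultimately show "cderiv K (GL + G) (DL + D)"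
    by (rule cderiv_contract_mset[rotated])
qed

lemma contractible_left_step:
  fixes F :: "'p lf"
  assumes lighter: "\<And>\<psi> :: 'p lf. weight \<psi> < weight F \<Longrightarrow> contractible K \<psi>"
  shows "cderiv K G D \<Longrightarrow> F \<in># G - {#F#} \<Longrightarrow> cderiv K (G - {#F#}) D"
proof (induction rule: cderiv.induct)
  case (decompL F' S G D)
  show ?case
  proof (cases "F' = F")
    case True
    then obtain G0 where G: "G = add_mset F G0"
      using decompL.prems by (auto dest: multi_member_split)
    have "cderiv K (add_mset F G0) D"
      by (rule cderiv_decompL_absorb[OF lighter _ decompL.hyps(2)])
        (use decompL.hyps(1,3) True in \<open>simp_all add: G\<close>)
    then show ?thesis
      using True by (simp add: G)
  next
    case False
    obtain G0 where G: "G = add_mset F (add_mset F G0)"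
      using decompL.prems False by (auto elim: in_diff_single_selfE)
    have "cderiv K (add_mset F' (add_mset F G0)) D"
      by (rule cderiv.decompL[OF decompL.hyps(1,2)]) (use decompL.IH in \<open>simp add: G\<close>)
    then show ?thesis
      using False by (simp add: G)
  qed
next
  case (decompR F' S G D)
  obtain G0 where G: "G = add_mset F (add_mset F G0)"
    using decompR.prems by (rule in_diff_single_selfE)
  show ?case
    by (rule cderiv.decompR[OF decompR.hyps(1,2)]) (use decompR.IH in \<open>simp add: G\<close>)
next
  case (init x p G D)
  show ?case
    by (rule cderiv.init[where x = x and p = p]) (use init in_diff_single_dup[OF init.prems] in auto)
next
  case (botL x G D)
  show ?case
    by (rule cderiv.botL[where x = x]) (use botL in_diff_single_dup[OF botL.prems] in auto)
next
  case (allL x a G A D)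
  show ?case
    by (rule cderiv.allL[where x = x and a = a and A = A])
      (use allL in_diffD[OF allL.prems] in_diff_single_dup[OF allL.prems] in auto)
next
  case (exR x a G A D)
  show ?case
    by (rule cderiv.exR[where x = x and a = a and A = A]) (use exR in_diff_single_dup[OF exR.prems] in auto)
next
  case (condL a x G A B D)
  show ?case
    by (rule cderiv.condL[where x = x and a = a and A = A and B = B])
      (use condL in_diffD[OF condL.prems] in_diff_single_dup[OF condL.prems] in auto)
next
  case (condLstar a x G A B D)
  show ?case
    by (rule cderiv.condLstar[where x = x and a = a and A = A and B = B])
      (use condLstar in_diffD[OF condLstar.prems] in_diff_single_dup[OF condLstar.prems] in auto)
next
  case (cndR c x G a A B D)
  show ?case
    by (rule cderiv.cndR[where c = c and x = x and a = a and A = A and B = B])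
      (use cndR in_diff_single_dup[OF cndR.prems] in auto)
next
  case (refl a G D)
  show ?case
    by (rule cderiv.refl[where a = a]) (use refl in_diffD[OF refl.prems] in_diff_single_dup[OF refl.prems] in auto)
next
  case (trans c b G a D)
  show ?case
    by (rule cderiv.trans[where c = c and b = b and a = a])
      (use trans in_diffD[OF trans.prems] in_diff_single_dup[OF trans.prems] in auto)
next
  case (subL x a G b D)
  show ?case
    by (rule cderiv.subL[where x = x and a = a and b = b])
      (use subL in_diffD[OF subL.prems] in_diff_single_dup[OF subL.prems] in auto)
qed

lemma contractible_right_step:
  fixes F :: "'p lf"
  assumes lighter: "\<And>\<psi> :: 'p lf. weight \<psi> < weight F \<Longrightarrow> contractible K \<psi>"
  shows "cderiv K G D \<Longrightarrow> F \<in># D - {#F#} \<Longrightarrow> cderiv K G (D - {#F#})"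
proof (induction rule: cderiv.induct)
  case (decompL F' S G D)
  obtain D0 where D: "D = add_mset F (add_mset F D0)"
    using decompL.prems by (rule in_diff_single_selfE)
  show ?case
    by (rule cderiv.decompL[OF decompL.hyps(1,2)]) (use decompL.IH in \<open>simp add: D\<close>)
next
  case (decompR F' S G D)
  show ?case
  proof (cases "F' = F")
    case True
    then obtain D0 where D: "D = add_mset F D0"
      using decompR.prems by (auto dest: multi_member_split)
    have "cderiv K G (add_mset F D0)"
      by (rule cderiv_decompR_absorb[OF lighter _ decompR.hyps(2)])
        (use decompR.hyps(1,3) True in \<open>simp_all add: D\<close>)
    then show ?thesis
      using True by (simp add: D)
  next
    case False
    obtain D0 where D: "D = add_mset F (add_mset F D0)"
      using decompR.prems False by (auto elim: in_diff_single_selfE)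
    have "cderiv K G (add_mset F' (add_mset F D0))"
      by (rule cderiv.decompR[OF decompR.hyps(1,2)]) (use decompR.IH in \<open>simp add: D\<close>)
    then show ?thesis
      using False by (simp add: D)
  qed
next
  case (init x p G D)
  show ?case
    by (rule cderiv.init[where x = x and p = p])
      (use init in_diff_single_dup[OF init.prems] in \<open>auto dest!: in_diffD\<close>)
next
  case (botL x G D)
  show ?case
    by (rule cderiv.botL[where x = x]) (use botL in \<open>auto dest!: in_diffD\<close>)
next
  case (allL x a G A D)
  show ?case
    by (rule cderiv.allL[where x = x and a = a and A = A]) (use allL in auto)
next
  case (exR x a G A D)
  show ?case
    by (rule cderiv.exR[where x = x and a = a and A = A])
      (use exR in_diffD[OF exR.prems] in_diff_single_dup[OF exR.prems] in auto)
next
  case (condL a x G A B D)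
  show ?case
    by (rule cderiv.condL[where x = x and a = a and A = A and B = B])
      (use condL in_diffD[OF condL.prems] in auto)
next
  case (condLstar a x G A B D)
  show ?case
    by (rule cderiv.condLstar[where x = x and a = a and A = A and B = B])
      (use condLstar in_diffD[OF condLstar.prems] in auto)
next
  case (cndR c x G a A B D)
  show ?case
    by (rule cderiv.cndR[where c = c and x = x and a = a and A = A and B = B])
      (use cndR in_diffD[OF cndR.prems] in_diff_single_dup[OF cndR.prems] in auto)
next
  case (refl a G D)
  show ?case
    by (rule cderiv.refl[where a = a]) (use refl in auto)
next
  case (trans c b G a D)
  show ?case
    by (rule cderiv.trans[where c = c and b = b and a = a]) (use trans in auto)
next
  case (subL x a G b D)
  show ?case
    by (rule cderiv.subL[where x = x and a = a and b = b]) (use subL in auto)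
qed

lemma all_contractible:
  fixes F :: "'p lf"
  shows "contractible K F"
proof (induction "weight F" arbitrary: F rule: less_induct)
  case less
  then have lighter: "contractible K \<psi>" if "weight \<psi> < weight F" for \<psi> :: "'p lf"
    using that by blast
  show ?case
    unfolding contractible_def
  proof (intro conjI allI impI)
    fix G D
    assume "cderiv K (add_mset F (add_mset F G)) D"
    then have "cderiv K (add_mset F (add_mset F G) - {#F#}) D"
      by (intro contractible_left_step lighter) simp_all
    then show "cderiv K (add_mset F G) D"
      by simp
  next
    fix G D
    assume "cderiv K G (add_mset F (add_mset F D))"
    then have "cderiv K G (add_mset F (add_mset F D) - {#F#})"
      by (intro contractible_right_step lighter) simp_all
    then show "cderiv K G (add_mset F D)"
      by simp
  qed
qed

lemma cderiv_contractL: "cderiv K (add_mset F (add_mset F G)) D \<Longrightarrow> cderiv K (add_mset F G) D"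
  using all_contractible[of K F] unfolding contractible_def by blast

section \<open>The admissible rules\<close>

lemma cderiv_mono_all:
  assumes "cderiv K G D" and "FAll b A \<in># G" and "RS b a \<in># G" and "FAll a A \<in># G - {#FAll b A#}"
  shows "cderiv K (G - {#FAll b A#}) D"
  using assms
proof (induction rule: cderiv.induct)
  case (allL x a' G A' D)
  show ?case
  proof (cases "FAll a' A' = FAll b A")
    case True
    have "cderiv K (add_mset (Lab x A') G - {#FAll b A#}) D"
      by (rule allL.IH) (use allL.prems in simp_all)
    then have "cderiv K (add_mset (RW x a) (add_mset (Lab x A) (G - {#FAll b A#}))) D"
      using True allL.prems(1) by (simp add: cderiv_weakenL)
    then have "cderiv K (add_mset (Lab x A) (add_mset (RW x a) (G - {#FAll b A#}))) D"
      by (simp add: add_mset_commute)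
    then have "cderiv K (add_mset (RW x a) (G - {#FAll b A#})) D"
      by (rule cderiv.allL[where a = a and A = A, rotated 2]) (use allL.prems in simp_all)
    then show ?thesis
      by (rule cderiv.subL[where a = b and b = a, rotated 2]) (use allL.hyps allL.prems True in simp_all)
  next
    case False
    show ?thesis
      by (rule cderiv.allL[where x = x and a = a' and A = A']) (use allL False in auto)
  qed
next
  case (decompL F S G D)
  obtain G0 where G: "G = add_mset (FAll b A) G0"
    using decompL.prems(1) decompL.hyps(1) by (auto dest: multi_member_split)
  have "cderiv K (add_mset F G0) D"
    by (rule cderiv.decompL[OF decompL.hyps(1,2)])
      (use decompL.IH decompL.prems decompL.hyps(1) in \<open>auto simp: G\<close>)
  then show ?case
    using decompL.hyps(1) by (auto simp: G)
next
  case (decompR F S G D)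
  obtain G0 where G: "G = add_mset (FAll b A) G0"
    using decompR.prems(1) by (auto dest: multi_member_split)
  show ?case
    by (rule cderiv.decompR[OF decompR.hyps(1,2)]) (use decompR.IH decompR.prems in \<open>simp add: G\<close>)
next
  case (init x p G D)
  show ?case
    by (rule cderiv.init[where x = x and p = p]) (use init in auto)
next
  case (botL x G D)
  show ?case
    by (rule cderiv.botL[where x = x]) (use botL in auto)
next
  case (exR x a' G A' D)
  show ?case
    by (rule cderiv.exR[where x = x and a = a' and A = A']) (use exR in auto)
next
  case (condL a' x G A' B D)
  show ?case
    by (rule cderiv.condL[where x = x and a = a' and A = A' and B = B]) (use condL in auto)
next
  case (condLstar a' x G A' B D)
  show ?case
    by (rule cderiv.condLstar[where x = x and a = a' and A = A' and B = B]) (use condLstar in auto)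
next
  case (cndR c x G a' A' B D)
  show ?case
    by (rule cderiv.cndR[where c = c and x = x and a = a' and A = A' and B = B]) (use cndR in auto)
next
  case (refl a' G D)
  show ?case
    by (rule cderiv.refl[where a = a']) (use refl in auto)
next
  case (trans c b' G a' D)
  show ?case
    by (rule cderiv.trans[where c = c and b = b' and a = a']) (use trans in auto)
next
  case (subL x a' G b' D)
  show ?case
    by (rule cderiv.subL[where x = x and a = a' and b = b']) (use subL in auto)
qed

lemma cderiv_FCnd_absorbs_FEx:
  assumes "cderiv K (add_mset (FEx a A) (add_mset (FCnd x a A B) G)) D"
  shows "cderiv K (add_mset (FCnd x a A B) G) D"
proof (rule cderiv.decompL[where S = "{}"])
  fix c GL DL
  assume "(GL, DL) \<in> premsL c (FCnd x a A B)"
  then have GL: "GL = {#RN c x, RS c a, FEx c A, FAll c (Impl A B)#}" and DL: "DL = {#}"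
    by auto
  let ?\<Gamma> = "add_mset (RN c x) (add_mset (RS c a) (add_mset (FAll c (Impl A B)) G))"
  have "cderiv K (add_mset (FEx c A) ?\<Gamma>) D"
  proof (rule cderiv.decompL[where S = "{}"])
    fix z GL' DL'
    assume "(GL', DL') \<in> premsL z (FEx c A)"
    then have GL': "GL' = {#RW z c, Lab z A#}" and DL': "DL' = {#}"
      by auto
    have "cderiv K (add_mset (FEx a A) (add_mset (FEx c A) ?\<Gamma>)) D"
      using cderiv_invert_FCnd[of K x a A B "add_mset (FEx a A) G" D c] assms
      by (simp add: add_mset_commute)
    then have "cderiv K (add_mset (FEx c A) (add_mset (RW z a) (add_mset (Lab z A) ?\<Gamma>))) D"
      using cderiv_invert_FEx[of K a A "add_mset (FEx c A) ?\<Gamma>" D z] by (simp add: add_mset_commute)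
    then have "cderiv K (add_mset (Lab z A) (add_mset (Lab z A) (add_mset (RW z a) (add_mset (RW z c) ?\<Gamma>)))) D"
      using cderiv_invert_FEx[of K c A "add_mset (RW z a) (add_mset (Lab z A) ?\<Gamma>)" D z]
      by (simp add: add_mset_commute)
    then have "cderiv K (add_mset (RW z a) (add_mset (RW z c) (add_mset (Lab z A) ?\<Gamma>))) D"
      by (auto dest: cderiv_contractL simp: add_mset_commute)
    then have "cderiv K (add_mset (RW z c) (add_mset (Lab z A) ?\<Gamma>)) D"
      by (rule cderiv.subL[where x = z and a = c and b = a, rotated 2]) simp_all
    then show "cderiv K (GL' + ?\<Gamma>) (DL' + D)"
      by (simp add: GL' DL' add_mset_commute)
  qed simp_all
  then show "cderiv K (GL + G) (DL + D)"
    by (simp add: GL DL add_mset_commute)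
qed simp_all

lemma mon_all_admissible:
  assumes "deriv K (add_mset (RS b a) (add_mset (FAll b A) (add_mset (FAll a A) G))) D"
  shows "deriv K (add_mset (RS b a) (add_mset (FAll a A) G)) D"
proof -
  have "cderiv K (add_mset (RS b a) (add_mset (FAll b A) (add_mset (FAll a A) G)) - {#FAll b A#}) D"
    using assms by (intro cderiv_mono_all[where a = a]) (simp_all add: deriv_iff_cderiv)
  then show ?thesis
    by (simp add: deriv_iff_cderiv)
qed

lemma condL_admissible_CLstar:
  assumes "deriv CLstar (add_mset (RN a x) (add_mset (Lab x (Cond A B)) G)) (add_mset (FEx a A) D)"
    and "deriv CLstar (add_mset (FCnd x a A B) (add_mset (RN a x) (add_mset (Lab x (Cond A B)) G))) D"
  shows "deriv CLstar (add_mset (RN a x) (add_mset (Lab x (Cond A B)) G)) D"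
proof -
  have "cderiv CLstar (add_mset (FEx a A) (add_mset (FCnd x a A B) (add_mset (RN a x) (add_mset (Lab x (Cond A B)) G)))) D"
    using assms(2) by (simp add: deriv_iff_cderiv cderiv_weakenL)
  then show ?thesis
    unfolding deriv_iff_cderiv
    by (rule cderiv.condLstar[where a = a and x = x and A = A and B = B, rotated 4])
      (use assms(1) in \<open>simp_all add: deriv_iff_cderiv\<close>)
qed

lemma condLstar_admissible_CL:
  assumes "deriv CL (add_mset (RN a x) (add_mset (Lab x (Cond A B)) G)) (add_mset (FEx a A) D)"
    and "deriv CL (add_mset (FEx a A) (add_mset (FCnd x a A B)
           (add_mset (RN a x) (add_mset (Lab x (Cond A B)) G)))) D"
  shows "deriv CL (add_mset (RN a x) (add_mset (Lab x (Cond A B)) G)) D"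
proof -
  have "cderiv CL (add_mset (FCnd x a A B) (add_mset (RN a x) (add_mset (Lab x (Cond A B)) G))) D"
    using assms(2) by (simp add: deriv_iff_cderiv cderiv_FCnd_absorbs_FEx)
  then show ?thesis
    unfolding deriv_iff_cderiv
    by (rule cderiv.condL[where a = a and x = x and A = A and B = B, rotated 4])
      (use assms(1) in \<open>simp_all add: deriv_iff_cderiv\<close>)
qed

theorem mainTheorem15:
  shows
  "(\<forall>(a::nlab) (b::nlab) (A::'p fm) G D.
      deriv CL (add_mset (RS b a) (add_mset (FAll b A) (add_mset (FAll a A) G))) D \<longrightarrow>
      deriv CL (add_mset (RS b a) (add_mset (FAll a A) G)) D)
 \<and> (\<forall>(a::nlab) (x::wlab) (A::'p fm) B G D.
      deriv CLstar (add_mset (RN a x) (add_mset (Lab x (Cond A B)) G)) (add_mset (FEx a A) D) \<and>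
      deriv CLstar (add_mset (FCnd x a A B) (add_mset (RN a x) (add_mset (Lab x (Cond A B)) G))) D
      \<longrightarrow> deriv CLstar (add_mset (RN a x) (add_mset (Lab x (Cond A B)) G)) D)
 \<and> (\<forall>(a::nlab) (x::wlab) (A::'p fm) B G D.
      deriv CL (add_mset (RN a x) (add_mset (Lab x (Cond A B)) G)) (add_mset (FEx a A) D) \<and>
      deriv CL (add_mset (FEx a A) (add_mset (FCnd x a A B)
                  (add_mset (RN a x) (add_mset (Lab x (Cond A B)) G)))) D
      \<longrightarrow> deriv CL (add_mset (RN a x) (add_mset (Lab x (Cond A B)) G)) D)"
  using mon_all_admissible condL_admissible_CLstar condLstar_admissible_CL by blast

end
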